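(* Let $s,t,D\ge1$ be integers, let $\mathcal G=\{G_1,\dots,G_t\}$ be an $s$-joined graph family on $n$ vertices, and let $\mathcal H$ be a rooted $[t]$-edge-colored graph with $\Delta^{mon}(\mathcal H)\le D$ and $|V(\mathcal H)|\le n-2sD-3s$. Let $(w,r)\in V(\mathcal H)\times[t]$ with $\deg_{H_r}(w)<D$ and let $\mathcal H+wu$ be the extension of $\mathcal H$ with $w\overset{r}{\sim}u$. If $\phi:\mathcal H\hookrightarrow\mathcal G$ is a $(2s,D)$-good embedding, then there is a $(2s,D)$-good embedding $\phi':\mathcal H+wu\hookrightarrow\mathcal G$ extending $\phi$.
   Context: A graph family $\mathcal G=\{G_1,\dots,G_t\}$ is a collection of $t$ simple graphs on a common finite vertex set $V$, $n=|V|$. For $X\subseteq V\times[t]$, $\Gamma_{\mathcal G}(X)=\bigcup_{(v,i)\in X}\{u\in V:uv\in E(G_i)\}$. The family is $s$-joined if for all $X\subseteq V\times[t]$ and $Y\subseteq V$ with $|X|\ge s$ and $|Y|\ge s$ there exist $(v,i)\in X$ and $y\in Y$ with $vy\in E(G_i)$. A $[t]$-edge-colored graph $\mathcal H$ is a simple graph with each edge colored in $[t]$; $H_i$ is its spanning subgraph of color-$i$ edges, $\deg_{H_i}(h)$ the number of color-$i$ edges at $h$, and $\Delta^{mon}(\mathcal H)=\max_i\max_h\deg_{H_i}(h)$. An embedding $\phi:\mathcal H\hookrightarrow\mathcal G$ is an injective map $V(\mathcal H)\to V$ with $\phi(x)\phi(y)\in E(G_i)$ for every edge $xy$ of color $i$.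 A rooted $[t]$-edge-colored graph is one with a distinguished set of roots such that, after deleting all edges with both ends roots, every connected component is a tree containing exactly one root; for a non-root $h$ the unique path from $h$ to the root set (meeting it only at its last vertex) determines the parent of $h$ (its neighbour on the path) and $c(h)$, the color of the edge from $h$ to its parent. For fixed $D$: $P_\phi(\mathcal H)=\{(\phi(h),c(h)):h\text{ non-root}\}$ and, for $X\subseteq V\times[t]$, $R(X,\phi)=|\Gamma_{\mathcal G}(X)\setminus\phi(V(\mathcal H))|-\sum_{(v,i)\in X}[D-\deg_{H_i}(\phi^{-1}(v))]-|P_\phi(\mathcal H)\cap X|$, with $\deg_{H_i}(\phi^{-1}(v))=0$ if $v\notin\phi(V(\mathcal H))$. The embedding $\phi$ is $(s,D)$-good if $R(X,\phi)\ge0$ for every $X\subseteq V\times[t]$ with $|X|\le s$. For $w\in V(\mathcal H)$ and $r\in[t]$ with $\deg_{H_r}(w)<D$, the extension $\mathcal H+wu$ with $w\overset{r}{\sim}u$ is the rooted graph obtained by adding a new non-root vertex $u$ joined to $w$ by an edge of color $r$ (roots unchanged). An embedding extends $\phi$ if it agrees with $\phi$ on $V(\mathcal H)$. *)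

theory Defs
  imports Main
begin

(* Graph family: colours i in {1..t}; G i x y means xy is an edge of G_i. *)
definition graph_family :: "'a set \<Rightarrow> nat \<Rightarrow> (nat \<Rightarrow> 'a \<Rightarrow> 'a \<Rightarrow> bool) \<Rightarrow> bool" where
  "graph_family V t G \<longleftrightarrow> finite V \<and>
     (\<forall>i\<in>{1..t}. \<forall>x y. G i x y \<longrightarrow> x \<in> V \<and> y \<in> V \<and> x \<noteq> y \<and> G i y x)"

definition Gamma :: "'a set \<Rightarrow> (nat \<Rightarrow> 'a \<Rightarrow> 'a \<Rightarrow> bool) \<Rightarrow> ('a \<times> nat) set \<Rightarrow> 'a set" where
  "Gamma V G X = {u \<in> V. \<exists>(v, i) \<in> X. G i u v}"

definition s_joined :: "'a set \<Rightarrow> nat \<Rightarrow> (nat \<Rightarrow> 'a \<Rightarrow> 'a \<Rightarrow> bool) \<Rightarrow> nat \<Rightarrow> bool" where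
  "s_joined V t G s \<longleftrightarrow>
     (\<forall>X Y. X \<subseteq> V \<times> {1..t} \<and> Y \<subseteq> V \<and> card X \<ge> s \<and> card Y \<ge> s \<longrightarrow>
        (\<exists>(v, i) \<in> X. \<exists>y \<in> Y. G i v y))"

definition colored_graph :: "'b set \<Rightarrow> nat \<Rightarrow> (nat \<Rightarrow> 'b \<Rightarrow> 'b \<Rightarrow> bool) \<Rightarrow> bool" where
  "colored_graph VH t HE \<longleftrightarrow> finite VH \<and>
     (\<forall>i x y. HE i x y \<longrightarrow> i \<in> {1..t} \<and> x \<in> VH \<and> y \<in> VH \<and> x \<noteq> y \<and> HE i y x) \<and>
     (\<forall>i j x y. HE i x y \<and> HE j x y \<longrightarrow> i = j)"

definition hdeg :: "'b set \<Rightarrow> (nat \<Rightarrow> 'b \<Rightarrow> 'b \<Rightarrow> bool) \<Rightarrow> nat \<Rightarrow> 'b \<Rightarrow> nat" where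
  "hdeg VH HE i h = card {y \<in> VH. HE i h y}"

definition max_mono_deg_le :: "'b set \<Rightarrow> nat \<Rightarrow> (nat \<Rightarrow> 'b \<Rightarrow> 'b \<Rightarrow> bool) \<Rightarrow> nat \<Rightarrow> bool" where
  "max_mono_deg_le VH t HE D \<longleftrightarrow> (\<forall>i\<in>{1..t}. \<forall>h\<in>VH. hdeg VH HE i h \<le> D)"

definition adjH :: "(nat \<Rightarrow> 'b \<Rightarrow> 'b \<Rightarrow> bool) \<Rightarrow> 'b \<Rightarrow> 'b \<Rightarrow> bool" where
  "adjH HE x y \<longleftrightarrow> (\<exists>i. HE i x y)"

definition is_walk :: "('b \<Rightarrow> 'b \<Rightarrow> bool) \<Rightarrow> 'b list \<Rightarrow> bool" where
  "is_walk A p \<longleftrightarrow> p \<noteq> [] \<and> (\<forall>k. Suc k < length p \<longrightarrow> A (p ! k) (p ! Suc k))"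

definition adj_noroot :: "(nat \<Rightarrow> 'b \<Rightarrow> 'b \<Rightarrow> bool) \<Rightarrow> 'b set \<Rightarrow> 'b \<Rightarrow> 'b \<Rightarrow> bool" where
  "adj_noroot HE R x y \<longleftrightarrow> adjH HE x y \<and> \<not> (x \<in> R \<and> y \<in> R)"

definition has_cycle :: "('b \<Rightarrow> 'b \<Rightarrow> bool) \<Rightarrow> bool" where
  "has_cycle A \<longleftrightarrow> (\<exists>p. is_walk A p \<and> distinct p \<and> length p \<ge> 3 \<and> A (last p) (hd p))"

(* rooted: after deleting root-root edges, every connected component is a tree
   (no cycles; components are connected by definition) containing exactly one root *)
definition rooted :: "'b set \<Rightarrow> (nat \<Rightarrow> 'b \<Rightarrow> 'b \<Rightarrow> bool) \<Rightarrow> 'b set \<Rightarrow> bool" where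
  "rooted VH HE R \<longleftrightarrow> R \<subseteq> VH \<and> \<not> has_cycle (adj_noroot HE R) \<and>
     (\<forall>v\<in>VH. \<exists>!\<rho>. \<rho> \<in> R \<and> (adj_noroot HE R)\<^sup>*\<^sup>* v \<rho>)"

definition root_path :: "(nat \<Rightarrow> 'b \<Rightarrow> 'b \<Rightarrow> bool) \<Rightarrow> 'b set \<Rightarrow> 'b \<Rightarrow> 'b list \<Rightarrow> bool" where
  "root_path HE R h p \<longleftrightarrow> is_walk (adjH HE) p \<and> distinct p \<and> hd p = h \<and> last p \<in> R \<and>
     (\<forall>x \<in> set (butlast p). x \<notin> R)"

definition parent :: "(nat \<Rightarrow> 'b \<Rightarrow> 'b \<Rightarrow> bool) \<Rightarrow> 'b set \<Rightarrow> 'b \<Rightarrow> 'b" where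
  "parent HE R h = (THE p. root_path HE R h p) ! 1"

definition pcol :: "(nat \<Rightarrow> 'b \<Rightarrow> 'b \<Rightarrow> bool) \<Rightarrow> 'b set \<Rightarrow> 'b \<Rightarrow> nat" where
  "pcol HE R h = (THE i. HE i h (parent HE R h))"

definition embedding :: "'a set \<Rightarrow> (nat \<Rightarrow> 'a \<Rightarrow> 'a \<Rightarrow> bool) \<Rightarrow> 'b set \<Rightarrow> (nat \<Rightarrow> 'b \<Rightarrow> 'b \<Rightarrow> bool)
    \<Rightarrow> ('b \<Rightarrow> 'a) \<Rightarrow> bool" where
  "embedding V G VH HE \<phi> \<longleftrightarrow> inj_on \<phi> VH \<and> \<phi> ` VH \<subseteq> V \<and>
     (\<forall>i x y. HE i x y \<longrightarrow> G i (\<phi> x) (\<phi> y))"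

definition degphi :: "'b set \<Rightarrow> (nat \<Rightarrow> 'b \<Rightarrow> 'b \<Rightarrow> bool) \<Rightarrow> ('b \<Rightarrow> 'a) \<Rightarrow> nat \<Rightarrow> 'a \<Rightarrow> nat" where
  "degphi VH HE \<phi> i v = (if v \<in> \<phi> ` VH then hdeg VH HE i (inv_into VH \<phi> v) else 0)"

definition Pset :: "'b set \<Rightarrow> (nat \<Rightarrow> 'b \<Rightarrow> 'b \<Rightarrow> bool) \<Rightarrow> 'b set \<Rightarrow> ('b \<Rightarrow> 'a) \<Rightarrow> ('a \<times> nat) set" where
  "Pset VH HE R \<phi> = {(\<phi> h, pcol HE R h) | h. h \<in> VH - R}"

definition Rval :: "'a set \<Rightarrow> (nat \<Rightarrow> 'a \<Rightarrow> 'a \<Rightarrow> bool) \<Rightarrow> 'b set \<Rightarrow> (nat \<Rightarrow> 'b \<Rightarrow> 'b \<Rightarrow> bool)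
    \<Rightarrow> 'b set \<Rightarrow> nat \<Rightarrow> ('b \<Rightarrow> 'a) \<Rightarrow> ('a \<times> nat) set \<Rightarrow> int" where
  "Rval V G VH HE R D \<phi> X =
     int (card (Gamma V G X - \<phi> ` VH))
     - (\<Sum>(v, i) \<in> X. int D - int (degphi VH HE \<phi> i v))
     - int (card (Pset VH HE R \<phi> \<inter> X))"

definition good :: "'a set \<Rightarrow> nat \<Rightarrow> (nat \<Rightarrow> 'a \<Rightarrow> 'a \<Rightarrow> bool) \<Rightarrow> 'b set \<Rightarrow> (nat \<Rightarrow> 'b \<Rightarrow> 'b \<Rightarrow> bool)
    \<Rightarrow> 'b set \<Rightarrow> nat \<Rightarrow> nat \<Rightarrow> ('b \<Rightarrow> 'a) \<Rightarrow> bool" where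
  "good V t G VH HE R s D \<phi> \<longleftrightarrow>
     (\<forall>X. X \<subseteq> V \<times> {1..t} \<and> card X \<le> s \<longrightarrow> Rval V G VH HE R D \<phi> X \<ge> 0)"

definition ext_edges :: "(nat \<Rightarrow> 'b \<Rightarrow> 'b \<Rightarrow> bool) \<Rightarrow> 'b \<Rightarrow> nat \<Rightarrow> 'b \<Rightarrow> nat \<Rightarrow> 'b \<Rightarrow> 'b \<Rightarrow> bool" where
  "ext_edges HE w r u = (\<lambda>i x y. HE i x y \<or> (i = r \<and> ((x = w \<and> y = u) \<or> (x = u \<and> y = w))))"

end

theory Submission
  imports Defs
begin

text \<open>Call a set \<open>X\<close> of at most \<open>2s\<close> pairs a zero if \<open>R(X, \<phi>) = 0\<close>. The function \<open>R(-, \<phi>)\<close> is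
  submodular, and \<open>s\<close>-joinedness together with the bound on \<open>|V(H)|\<close> makes it positive on sets of
  size between \<open>s\<close> and \<open>2s\<close>; hence zeros have fewer than \<open>s\<close> elements, the union of two zeros
  is a zero, and there is a largest zero \<open>U\<close> avoiding \<open>(\<phi>(w), r)\<close>. Since \<open>deg\<^sub>H\<^sub>r(w) < D\<close>,
  nonnegativity of \<open>R\<close> at \<open>U + (\<phi>(w), r)\<close> yields an unused neighbour \<open>y\<close> of \<open>\<phi>(w)\<close> in \<open>G\<^sub>r\<close>
  outside \<open>\<Gamma>(U)\<close>. Mapping \<open>u\<close> to \<open>y\<close> lowers \<open>R(X)\<close> by one only when \<open>y \<in> \<Gamma>(X)\<close> and
  \<open>(\<phi>(w), r) \<notin> X\<close>; such an \<open>X\<close> is not a zero, as otherwise \<open>X \<subseteq> U\<close>.\<close>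

section \<open>Walks and cycles\<close>

lemma is_walk_iff_successively: "is_walk A p \<longleftrightarrow> p \<noteq> [] \<and> successively A p"
  by (simp add: is_walk_def successively_conv_nth)

lemma successively_rtranclp_hd_last:
  "successively A p \<Longrightarrow> p \<noteq> [] \<Longrightarrow> A\<^sup>*\<^sup>* (hd p) (last p)"
proof (induction p)
  case Nil
  then show ?case by simp
next
  case (Cons a p)
  then show ?case
    by (cases p) (auto simp: successively_Cons intro: converse_rtranclp_into_rtranclp)
qed

text \<open>Two simple paths leaving \<open>a\<close> through different neighbours and meeting again close
  a cycle: follow the first one up to its first common vertex \<open>z\<close> with the second, then the
  second one back from \<open>z\<close>.\<close>

lemma has_cycle_if_paths_meet:
  assumes sym: "\<And>x y. A x y \<Longrightarrow> A y x"
    and sp: "successively A p" and sq: "successively A q"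
    and dp: "distinct p" and dq: "distinct q"
    and ap: "a \<notin> set p" and aq: "a \<notin> set q"
    and hp: "A a (hd p)" and hq: "A a (hd q)" and hne: "hd p \<noteq> hd q"
    and meet: "set p \<inter> set q \<noteq> {}"
  shows "has_cycle A"
proof -
  obtain p1 z p2 where P: "p = p1 @ z # p2" and zq: "z \<in> set q" and p1q: "\<forall>y\<in>set p1. y \<notin> set q"
    using meet split_list_first_prop[of p "\<lambda>x. x \<in> set q"] by blast
  obtain q1 q2 where Q: "q = q1 @ z # q2" using zq split_list by metis
  define c where "c = (a # p1 @ [z]) @ rev q1"
  have "successively A (p1 @ [z])"
    using sp unfolding P by (auto simp: successively_append_iff)
  moreover have "hd (p1 @ [z]) = hd p" using P by (cases p1) auto
  moreover have "successively A q1" and "q1 = [] \<or> A (last q1) z"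
    using sq unfolding Q by (auto simp: successively_append_iff)
  ultimately have sc: "successively A c"
    unfolding c_def using hp sym
    by (subst successively_append_iff) (auto simp: successively_Cons hd_rev intro: successively_mono)
  have dc: "distinct c" unfolding c_def using dp dq ap aq p1q P Q by auto
  have "last c = hd q" using Q by (cases "q1 = []") (simp_all add: c_def last_rev)
  then have lc: "A (last c) (hd c)" using hq sym by (simp add: c_def)
  have "length c \<ge> 3"
  proof (rule ccontr)
    assume "\<not> 3 \<le> length c"
    then have "p1 = [] \<and> q1 = []" by (cases p1; cases q1; simp add: c_def)
    then show False using hne P Q by simp
  qed
  then show ?thesis unfolding has_cycle_def is_walk_iff_successively
    using sc dc lc by (auto simp: c_def)
qed

lemma has_cycle_if_two_paths:
  assumes sym: "\<And>x y. A x y \<Longrightarrow> A y x"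
  shows "successively A p \<Longrightarrow> successively A q \<Longrightarrow> distinct p \<Longrightarrow> distinct q \<Longrightarrow> p \<noteq> []
    \<Longrightarrow> q \<noteq> [] \<Longrightarrow> hd p = hd q \<Longrightarrow> last p = last q \<Longrightarrow> p \<noteq> q \<Longrightarrow> has_cycle A"
proof (induction p arbitrary: q)
  case Nil
  then show ?case by simp
next
  case (Cons a p')
  obtain q' where Q: "q = a # q'" using Cons.prems by (cases q) auto
  have "p' \<noteq> []" "q' \<noteq> []" using Cons.prems Q by auto
  then have sp: "successively A p'" "A a (hd p')" and sq: "successively A q'" "A a (hd q')"
    using Cons.prems(1,2) Q by (auto simp: successively_Cons)
  show ?case
  proof (cases "hd p' = hd q'")
    case True
    show ?thesis
      by (rule Cons.IH[of q']) (use Cons.prems Q \<open>p' \<noteq> []\<close> \<open>q' \<noteq> []\<close> sp sq True in auto)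
  next
    case False
    have "last p' \<in> set p' \<inter> set q'"
      using Cons.prems(8) Q \<open>p' \<noteq> []\<close> \<open>q' \<noteq> []\<close> by (metis IntI last.simps last_in_set)
    then have "set p' \<inter> set q' \<noteq> {}" by blast
    then show ?thesis
      using has_cycle_if_paths_meet[OF sym sp(1) sq(1), of a] sp sq Cons.prems Q
        \<open>p' \<noteq> []\<close> \<open>q' \<noteq> []\<close> False by auto
  qed
qed

section \<open>Root paths and parents\<close>

lemma adjH_sym: "colored_graph VH t HE \<Longrightarrow> adjH HE x y \<Longrightarrow> adjH HE y x"
  unfolding colored_graph_def adjH_def by blast

lemma colored_graph_edge_in_vertices:
  "colored_graph VH t HE \<Longrightarrow> HE i x y \<Longrightarrow> x \<in> VH \<and> y \<in> VH"
  unfolding colored_graph_def by blast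

lemma adjH_in_vertices: "colored_graph VH t HE \<Longrightarrow> adjH HE x y \<Longrightarrow> x \<in> VH \<and> y \<in> VH"
  unfolding adjH_def by (blast dest: colored_graph_edge_in_vertices)

lemma rooted_roots_subset: "rooted VH HE R \<Longrightarrow> R \<subseteq> VH"
  by (simp add: rooted_def)

lemma root_path_nonempty: "root_path HE R h p \<Longrightarrow> p \<noteq> [] \<and> hd p = h"
  by (simp add: root_path_def is_walk_def)

lemma root_path_exists:
  assumes "(adjH HE)\<^sup>*\<^sup>* x \<rho>" "\<rho> \<in> R"
  shows "\<exists>p. root_path HE R x p"
  using assms(1)
proof (induction rule: converse_rtranclp_induct)
  case base
  then show ?case using assms(2) by (auto simp: root_path_def is_walk_def intro!: exI[of _ "[\<rho>]"])
next
  case (step x z)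
  then obtain pz where pz: "root_path HE R z pz" by blast
  then have pz': "pz \<noteq> []" "successively (adjH HE) pz" "distinct pz" "hd pz = z" "last pz \<in> R"
    "\<forall>y\<in>set (butlast pz). y \<notin> R"
    by (auto simp: root_path_def is_walk_iff_successively)
  consider "x \<in> R" | "x \<notin> R" "x \<in> set pz" | "x \<notin> R" "x \<notin> set pz" by blast
  then show ?case
  proof cases
    case 1
    then show ?thesis by (auto simp: root_path_def is_walk_def intro!: exI[of _ "[x]"])
  next
    case 2
    then obtain ys zs where P: "pz = ys @ x # zs" using split_list by metis
    have "root_path HE R x (x # zs)"
      unfolding root_path_def is_walk_iff_successively
    proof (intro conjI)
      show "successively (adjH HE) (x # zs)" using pz'(2) P by (auto simp: successively_append_iff)
      show "distinct (x # zs)" using pz'(3) P by auto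
      show "last (x # zs) \<in> R" using pz'(5) P by auto
      show "\<forall>y\<in>set (butlast (x # zs)). y \<notin> R" using pz'(6) P by (auto simp: butlast_append)
    qed auto
    then show ?thesis by blast
  next
    case 3
    then have "root_path HE R x (x # pz)"
      using pz' step.hyps(1) by (auto simp: root_path_def is_walk_iff_successively successively_Cons)
    then show ?thesis by blast
  qed
qed

lemma successively_adj_noroot:
  assumes "successively (adjH HE) p" "\<forall>y\<in>set (butlast p). y \<notin> R"
  shows "successively (adj_noroot HE R) p"
  unfolding successively_conv_nth
proof (intro allI impI)
  fix i assume i: "Suc i < length p"
  then have "butlast p ! i \<in> set (butlast p)" by (simp add: nth_mem)
  then have "p ! i \<in> set (butlast p)" using i by (simp add: nth_butlast)
  then show "adj_noroot HE R (p ! i) (p ! Suc i)"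
    using assms i unfolding adj_noroot_def successively_conv_nth by blast
qed

text \<open>Two root paths of \<open>h\<close> end in roots reachable from \<open>h\<close> in the forest, hence in the
  same root; if they differed they would produce a cycle of the forest.\<close>

lemma root_path_unique:
  assumes cg: "colored_graph VH t HE" and ro: "rooted VH HE R" and h: "h \<in> VH"
  shows "\<exists>!p. root_path HE R h p"
proof -
  have ex1: "\<exists>!\<rho>. \<rho> \<in> R \<and> (adj_noroot HE R)\<^sup>*\<^sup>* h \<rho>" using ro h unfolding rooted_def by simp
  then obtain \<rho> where \<rho>: "\<rho> \<in> R" "(adj_noroot HE R)\<^sup>*\<^sup>* h \<rho>" by blast
  have "(adjH HE)\<^sup>*\<^sup>* h \<rho>"
    using \<rho>(2) by (rule rtranclp_mono[THEN predicate2D, rotated]) (auto simp: adj_noroot_def)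
  then obtain p where p: "root_path HE R h p" using root_path_exists \<rho>(1) by metis
  have sym: "\<And>x y. adj_noroot HE R x y \<Longrightarrow> adj_noroot HE R y x"
    using adjH_sym[OF cg] by (auto simp: adj_noroot_def)
  have forest_path: "successively (adj_noroot HE R) q \<and> q \<noteq> [] \<and> hd q = h \<and> distinct q
      \<and> last q \<in> R \<and> (adj_noroot HE R)\<^sup>*\<^sup>* h (last q)" if "root_path HE R h q" for q
    using that successively_adj_noroot[of HE _ R] successively_rtranclp_hd_last[of "adj_noroot HE R"]
    by (auto simp: root_path_def is_walk_iff_successively)
  have "q = p" if q: "root_path HE R h q" for q
  proof (rule ccontr)
    assume "q \<noteq> p"
    moreover have "last q = last p" using ex1 forest_path[OF q] forest_path[OF p] by blast
    ultimately have "has_cycle (adj_noroot HE R)"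
      using has_cycle_if_two_paths[OF sym, where p=q and q=p] forest_path[OF q] forest_path[OF p] by auto
    then show False using ro by (simp add: rooted_def)
  qed
  then show ?thesis using p by blast
qed

lemma root_path_subset:
  assumes cg: "colored_graph VH t HE" and p: "root_path HE R h p" and h: "h \<in> VH"
  shows "set p \<subseteq> VH"
proof -
  have "set q \<subseteq> VH" if "successively (adjH HE) q" "q \<noteq> []" "hd q \<in> VH" for q
    using that
  proof (induction q)
    case (Cons a q)
    then show ?case using adjH_in_vertices[OF cg] by (cases q) (auto simp: successively_Cons)
  qed simp
  then show ?thesis using p h by (auto simp: root_path_def is_walk_iff_successively)
qed

lemma parent_eq_nth:
  "\<exists>!p. root_path HE R h p \<Longrightarrow> root_path HE R h p \<Longrightarrow> parent HE R h = p ! 1"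
  unfolding parent_def by (metis the1_equality)

lemma parent_in_vertices:
  assumes cg: "colored_graph VH t HE" and ro: "rooted VH HE R" and h: "h \<in> VH" "h \<notin> R"
  shows "parent HE R h \<in> VH"
proof -
  obtain p where p: "root_path HE R h p" using root_path_unique[OF cg ro h(1)] by blast
  have "length p \<ge> 2"
  proof (rule ccontr)
    assume "\<not> 2 \<le> length p"
    then obtain x where "p = [x]" using root_path_nonempty[OF p]
      by (cases p) (auto simp: Suc_le_eq)
    then show False using p h by (auto simp: root_path_def)
  qed
  then show ?thesis
    using root_path_subset[OF cg p h(1)] parent_eq_nth[OF root_path_unique[OF cg ro h(1)] p]
    by (simp add: subset_iff)
qed

section \<open>The extension \<open>H + wu\<close>\<close>

lemma adjH_ext_edges:
  "adjH (ext_edges HE w r u) x y \<longleftrightarrow> adjH HE x y \<or> (x = w \<and> y = u) \<or> (x = u \<and> y = w)"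
  by (auto simp: adjH_def ext_edges_def)

text \<open>The new vertex \<open>u\<close> is a leaf and not a root, so it can lie on no root path of an old
  vertex.\<close>

lemma root_path_ext_edges:
  assumes cg: "colored_graph VH t HE" and ro: "rooted VH HE R" and u: "u \<notin> VH" and h: "h \<in> VH"
  shows "root_path (ext_edges HE w r u) R h p \<longleftrightarrow> root_path HE R h p"
proof
  let ?A = "adjH (ext_edges HE w r u)"
  assume rp: "root_path (ext_edges HE w r u) R h p"
  then have sp: "successively ?A p" "p \<noteq> []" "distinct p" "hd p = h" "last p \<in> R"
    by (auto simp: root_path_def is_walk_iff_successively)
  have "u \<notin> set p"
  proof
    assume "u \<in> set p"
    then obtain ys zs where P: "p = ys @ u # zs" using split_list by metis
    have "ys \<noteq> []" using sp(4) P h u by auto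
    moreover have "zs \<noteq> []" using sp(5) P rooted_roots_subset[OF ro] u by auto
    moreover have "ys = [] \<or> ?A (last ys) u" and "zs = [] \<or> ?A u (hd zs)"
      using sp(1) unfolding P by (auto simp: successively_append_iff successively_Cons)
    moreover have "\<not> adjH HE x u" "\<not> adjH HE u x" for x using adjH_in_vertices[OF cg] u by blast+
    ultimately have "last ys = w" "hd zs = w" "last ys \<in> set ys" "hd zs \<in> set zs"
      by (auto simp: adjH_ext_edges)
    then show False using sp(3) P by auto
  qed
  then have "successively (adjH HE) p"
    by (intro successively_mono[OF sp(1)]) (auto simp: adjH_ext_edges)
  then show "root_path HE R h p" using rp by (auto simp: root_path_def is_walk_iff_successively)
next
  assume rp: "root_path HE R h p"
  then have "successively (adjH HE) p" by (simp add: root_path_def is_walk_iff_successively)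
  then have "successively (adjH (ext_edges HE w r u)) p"
    by (rule successively_mono) (simp add: adjH_ext_edges)
  then show "root_path (ext_edges HE w r u) R h p"
    using rp by (auto simp: root_path_def is_walk_iff_successively)
qed

lemma pcol_ext_edges:
  assumes cg: "colored_graph VH t HE" and ro: "rooted VH HE R" and u: "u \<notin> VH"
    and h: "h \<in> VH" "h \<notin> R"
  shows "pcol (ext_edges HE w r u) R h = pcol HE R h"
proof -
  have "parent (ext_edges HE w r u) R h = parent HE R h"
    using root_path_ext_edges[OF cg ro u h(1)] by (simp add: parent_def)
  moreover have "parent HE R h \<noteq> u" "h \<noteq> u"
    using parent_in_vertices[OF cg ro h] u h by auto
  ultimately show ?thesis by (simp add: pcol_def ext_edges_def)
qed

lemma root_path_ext_edges_new:
  assumes cg: "colored_graph VH t HE" and ro: "rooted VH HE R" and u: "u \<notin> VH" and w: "w \<in> VH"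
  shows "root_path (ext_edges HE w r u) R u p \<longleftrightarrow> (\<exists>p'. p = u # p' \<and> root_path HE R w p')"
proof -
  let ?E = "ext_edges HE w r u"
  have uR: "u \<notin> R" using rooted_roots_subset[OF ro] u by blast
  have "\<not> adjH HE u x" for x using adjH_in_vertices[OF cg] u by blast
  then have "adjH ?E u x \<longleftrightarrow> x = w" for x by (auto simp: adjH_ext_edges)
  then have "root_path ?E R u (u # p') \<longleftrightarrow> root_path ?E R w p'" if "u \<notin> set p'" for p'
    using that uR by (cases p') (auto simp: root_path_def is_walk_iff_successively successively_Cons)
  moreover have "u \<notin> set p'" if "root_path HE R w p'" for p'
    using root_path_subset[OF cg that w] u by blast
  moreover have "\<exists>p'. p = u # p' \<and> u \<notin> set p'" if "root_path ?E R u p"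
    using that by (cases p) (auto simp: root_path_def is_walk_def)
  ultimately show ?thesis
    using root_path_ext_edges[OF cg ro u w] by blast
qed

lemma pcol_ext_edges_new:
  assumes cg: "colored_graph VH t HE" and ro: "rooted VH HE R" and u: "u \<notin> VH" and w: "w \<in> VH"
  shows "pcol (ext_edges HE w r u) R u = r"
proof -
  let ?E = "ext_edges HE w r u"
  obtain pw where pw: "root_path HE R w pw" and pw_unique: "\<And>q. root_path HE R w q \<Longrightarrow> q = pw"
    using root_path_unique[OF cg ro w] by blast
  have "root_path ?E R u (u # pw)" using root_path_ext_edges_new[OF cg ro u w] pw by blast
  moreover have "p = u # pw" if "root_path ?E R u p" for p
    using that root_path_ext_edges_new[OF cg ro u w] pw_unique by blast
  ultimately have "parent ?E R u = (u # pw) ! 1" by (blast intro: parent_eq_nth)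
  then have "parent ?E R u = w" using root_path_nonempty[OF pw] by (auto simp: hd_conv_nth)
  moreover have "\<not> HE i u w" for i using colored_graph_edge_in_vertices[OF cg] u by blast
  ultimately show ?thesis by (simp add: pcol_def ext_edges_def)
qed

lemma hdeg_ext_edges:
  assumes cg: "colored_graph VH t HE" and u: "u \<notin> VH" and h: "h \<in> VH"
  shows "hdeg (insert u VH) (ext_edges HE w r u) i h
    = hdeg VH HE i h + (if h = w \<and> i = r then 1 else 0)"
proof -
  have "{z \<in> insert u VH. ext_edges HE w r u i h z}
      = {z \<in> VH. HE i h z} \<union> (if h = w \<and> i = r then {u} else {})"
    using h u colored_graph_edge_in_vertices[OF cg, of i h] by (auto simp: ext_edges_def)
  moreover have "finite {z \<in> VH. HE i h z}" using cg by (simp add: colored_graph_def)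
  ultimately show ?thesis using u by (auto simp: hdeg_def)
qed

lemma hdeg_ext_edges_new:
  assumes cg: "colored_graph VH t HE" and u: "u \<notin> VH" and w: "w \<in> VH"
  shows "hdeg (insert u VH) (ext_edges HE w r u) i u = (if i = r then 1 else 0)"
proof -
  have "{z \<in> insert u VH. ext_edges HE w r u i u z} = (if i = r then {w} else {})"
    using u w colored_graph_edge_in_vertices[OF cg, of i u] by (auto simp: ext_edges_def)
  then show ?thesis by (simp add: hdeg_def)
qed

lemma fun_upd_image_insert: "u \<notin> A \<Longrightarrow> f(u := y) ` insert u A = insert y (f ` A)"
  by (auto simp: image_iff)

lemma inj_on_fun_upd_insert:
  "inj_on f A \<Longrightarrow> u \<notin> A \<Longrightarrow> y \<notin> f ` A \<Longrightarrow> inj_on (f(u := y)) (insert u A)"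
  by (auto simp: inj_on_def image_iff)

lemma embedding_ext_edges:
  assumes gf: "graph_family V t G" and cg: "colored_graph VH t HE" and r: "r \<in> {1..t}"
    and u: "u \<notin> VH" and w: "w \<in> VH" and emb: "embedding V G VH HE \<phi>"
    and y: "y \<in> V" "y \<notin> \<phi> ` VH" and wy: "G r (\<phi> w) y"
  shows "embedding V G (insert u VH) (ext_edges HE w r u) (\<phi>(u := y))"
proof -
  have "G r y (\<phi> w)" using gf r wy by (auto simp: graph_family_def)
  moreover have "x \<in> VH \<and> z \<in> VH" if "HE i x z" for i x z
    using that by (rule colored_graph_edge_in_vertices[OF cg])
  ultimately show ?thesis
    using emb u w y wy inj_on_fun_upd_insert[of \<phi> VH u y]
    unfolding embedding_def fun_upd_image_insert[OF u] by (auto simp: ext_edges_def)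
qed

lemma degphi_ext_edges:
  assumes cg: "colored_graph VH t HE" and u: "u \<notin> VH" and w: "w \<in> VH"
    and inj: "inj_on \<phi> VH" and y: "y \<notin> \<phi> ` VH"
  shows "degphi (insert u VH) (ext_edges HE w r u) (\<phi>(u := y)) i v
     = degphi VH HE \<phi> i v + (if v = \<phi> w \<and> i = r then 1 else 0) + (if v = y \<and> i = r then 1 else 0)"
proof -
  let ?\<psi> = "\<phi>(u := y)"
  have inj': "inj_on ?\<psi> (insert u VH)" using inj_on_fun_upd_insert[OF inj u y] .
  consider "v = y" | "v \<noteq> y" "v \<in> \<phi> ` VH" | "v \<noteq> y" "v \<notin> \<phi> ` VH" by blast
  then show ?thesis
  proof cases
    case 1
    have "inv_into (insert u VH) ?\<psi> y = u" using inv_into_f_f[OF inj', of u] by simp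
    then show ?thesis
      using 1 y w hdeg_ext_edges_new[OF cg u w]
      unfolding degphi_def fun_upd_image_insert[OF u] by auto
  next
    case 2
    then obtain h where h: "h \<in> VH" "v = \<phi> h" by blast
    then have "?\<psi> h = v" using u by auto
    then have "inv_into (insert u VH) ?\<psi> v = h" "inv_into VH \<phi> v = h"
      using inv_into_f_f[OF inj', of h] inv_into_f_f[OF inj h(1)] h by auto
    moreover have "v = \<phi> w \<longleftrightarrow> h = w" using h inj w by (auto simp: inj_on_def)
    ultimately show ?thesis
      using 2 hdeg_ext_edges[OF cg u h(1), of w r i]
      unfolding degphi_def fun_upd_image_insert[OF u] by simp
  next
    case 3
    then show ?thesis using w unfolding degphi_def fun_upd_image_insert[OF u] by auto
  qed
qed

lemma Pset_image: "Pset VH HE R \<phi> = (\<lambda>h. (\<phi> h, pcol HE R h)) ` (VH - R)"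
  by (auto simp: Pset_def)

lemma Pset_ext_edges:
  assumes cg: "colored_graph VH t HE" and ro: "rooted VH HE R" and u: "u \<notin> VH" and w: "w \<in> VH"
  shows "Pset (insert u VH) (ext_edges HE w r u) R (\<phi>(u := y)) = insert (y, r) (Pset VH HE R \<phi>)"
proof -
  have "insert u VH - R = insert u (VH - R)" using rooted_roots_subset[OF ro] u by blast
  moreover have "(\<lambda>h. ((\<phi>(u := y)) h, pcol (ext_edges HE w r u) R h)) ` (VH - R)
      = (\<lambda>h. (\<phi> h, pcol HE R h)) ` (VH - R)"
    using pcol_ext_edges[OF cg ro u] u by (intro image_cong) auto
  ultimately show ?thesis using pcol_ext_edges_new[OF cg ro u w] by (simp add: Pset_image)
qed

section \<open>The function \<open>R(X, \<phi>)\<close>\<close>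

lemma Gamma_subset: "Gamma V G X \<subseteq> V"
  by (auto simp: Gamma_def)

lemma Gamma_Un: "Gamma V G (X \<union> Y) = Gamma V G X \<union> Gamma V G Y"
  by (auto simp: Gamma_def)

lemma Gamma_mono: "X \<subseteq> Y \<Longrightarrow> Gamma V G X \<subseteq> Gamma V G Y"
  by (auto simp: Gamma_def)

lemma Rval_empty: "Rval V G VH HE R D \<phi> {} = 0"
  by (simp add: Rval_def Gamma_def)

lemma Rval_submodular:
  assumes fV: "finite V" and fX: "finite X" and fY: "finite Y"
  shows "Rval V G VH HE R D \<phi> (X \<union> Y) + Rval V G VH HE R D \<phi> (X \<inter> Y)
       \<le> Rval V G VH HE R D \<phi> X + Rval V G VH HE R D \<phi> Y"
proof -
  let ?T = "\<phi> ` VH" and ?P = "Pset VH HE R \<phi>"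
  let ?A = "Gamma V G X - ?T" and ?B = "Gamma V G Y - ?T"
  let ?g = "\<lambda>(v, i). int D - int (degphi VH HE \<phi> i v)"
  have fA: "finite ?A" "finite ?B" using fV Gamma_subset by (metis finite_Diff finite_subset)+
  have "Gamma V G (X \<inter> Y) - ?T \<subseteq> ?A \<inter> ?B"
    using Gamma_mono[of "X \<inter> Y" X V G] Gamma_mono[of "X \<inter> Y" Y V G] by auto
  then have "card (Gamma V G (X \<union> Y) - ?T) + card (Gamma V G (X \<inter> Y) - ?T) \<le> card ?A + card ?B"
    using card_Un_Int[OF fA] card_mono[of "?A \<inter> ?B"] fA by (simp add: Gamma_Un Un_Diff)
  moreover have "sum ?g (X \<union> Y) + sum ?g (X \<inter> Y) = sum ?g X + sum ?g Y"
    using sum.union_inter[OF fX fY] .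
  moreover have "card (?P \<inter> (X \<union> Y)) + card (?P \<inter> (X \<inter> Y)) = card (?P \<inter> X) + card (?P \<inter> Y)"
    using card_Un_Int[of "?P \<inter> X" "?P \<inter> Y"] fX fY by (simp add: Int_Un_distrib Int_assoc Int_left_commute)
  ultimately show ?thesis unfolding Rval_def by linarith
qed

text \<open>By \<open>s\<close>-joinedness a set \<open>X\<close> of at least \<open>s\<close> pairs misses fewer than \<open>s\<close> vertices with
  its neighbourhood, which outweighs the at most \<open>2sD + 2s\<close> subtracted terms.\<close>

lemma Rval_pos_if_card_ge:
  assumes gf: "graph_family V t G" and sj: "s_joined V t G s" and fVH: "finite VH"
    and small: "int (card VH) \<le> int (card V) - 2 * int s * int D - 3 * int s"
    and X: "X \<subseteq> V \<times> {1..t}" "s \<le> card X" "card X \<le> 2 * s" and s: "s \<ge> 1"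
  shows "Rval V G VH HE R D \<phi> X \<ge> 1"
proof -
  have fV: "finite V" using gf by (simp add: graph_family_def)
  have fX: "finite X" using X s by (cases "finite X") auto
  let ?\<Gamma> = "Gamma V G X"
  have "card (V - ?\<Gamma>) < s"
  proof (rule ccontr)
    assume "\<not> card (V - ?\<Gamma>) < s"
    then have "\<exists>(v, i) \<in> X. \<exists>y \<in> V - ?\<Gamma>. G i v y"
      using sj X unfolding s_joined_def by (simp add: Diff_subset)
    then obtain v i y where vi: "(v, i) \<in> X" "y \<in> V - ?\<Gamma>" "G i v y" by blast
    then have "G i y v" using gf X unfolding graph_family_def by blast
    then show False using vi unfolding Gamma_def by blast
  qed
  moreover have "card V = card ?\<Gamma> + card (V - ?\<Gamma>)"
    using card_Diff_subset[OF finite_subset[OF Gamma_subset fV] Gamma_subset]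
      card_mono[OF fV Gamma_subset] by (simp add: Gamma_subset)
  moreover have "card ?\<Gamma> - card (\<phi> ` VH) \<le> card (?\<Gamma> - \<phi> ` VH)" "card (\<phi> ` VH) \<le> card VH"
    using fVH by (simp_all add: diff_card_le_card_Diff card_image_le)
  moreover have "(\<Sum>(v, i) \<in> X. int D - int (degphi VH HE \<phi> i v)) \<le> int (card X) * int D"
    using sum_mono[of X "\<lambda>(v, i). int D - int (degphi VH HE \<phi> i v)" "\<lambda>_. int D"]
    by (simp add: case_prod_beta)
  moreover have "int (card X) * int D \<le> 2 * int s * int D" using X by (simp add: mult_right_mono)
  moreover have "card (Pset VH HE R \<phi> \<inter> X) \<le> card X" using fX by (simp add: card_mono)
  ultimately show ?thesis unfolding Rval_def using small X by linarith
qed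

text \<open>Mapping \<open>u\<close> to an unused vertex \<open>y\<close> costs the one neighbour \<open>y\<close> (if \<open>y \<in> \<Gamma>(X)\<close>) and
  the new pair \<open>(y, r)\<close> of \<open>P\<close>, which cancels the degree gain at \<open>y\<close>; the degree gain at
  \<open>(\<phi>(w), r)\<close> is a net profit.\<close>

lemma Rval_ext_edges:
  assumes fV: "finite V" and cg: "colored_graph VH t HE" and ro: "rooted VH HE R"
    and u: "u \<notin> VH" and w: "w \<in> VH"
    and inj: "inj_on \<phi> VH" and y: "y \<notin> \<phi> ` VH" and fX: "finite X"
  shows "Rval V G (insert u VH) (ext_edges HE w r u) R D (\<phi>(u := y)) X
     = Rval V G VH HE R D \<phi> X - (if y \<in> Gamma V G X then 1 else 0)
       + (if (\<phi> w, r) \<in> X then 1 else 0)"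
proof -
  let ?A = "Gamma V G X - \<phi> ` VH" and ?P = "Pset VH HE R \<phi>"
  have fA: "finite ?A" using fV Gamma_subset[of V G X] by (metis finite_Diff finite_subset)
  have "Gamma V G X - insert y (\<phi> ` VH) = ?A - {y}" by auto
  moreover have "y \<in> ?A \<longleftrightarrow> y \<in> Gamma V G X" using y by simp
  ultimately have c1: "int (card (Gamma V G X - insert y (\<phi> ` VH)))
      = int (card ?A) - (if y \<in> Gamma V G X then 1 else 0)"
    using fA card.remove[OF fA, of y] by auto
  let ?g = "\<lambda>(v, i). int D - int (degphi VH HE \<phi> i v)"
  let ?d = "\<lambda>a x. if x = a then 1 else (0::int)"
  have "(\<Sum>(v, i) \<in> X. int D - int (degphi (insert u VH) (ext_edges HE w r u) (\<phi>(u := y)) i v))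
      = (\<Sum>x \<in> X. ?g x - ?d (\<phi> w, r) x - ?d (y, r) x)"
    by (rule sum.cong) (auto simp: degphi_ext_edges[OF cg u w inj y] split: if_splits)
  also have "\<dots> = sum ?g X - (if (\<phi> w, r) \<in> X then 1 else 0) - (if (y, r) \<in> X then 1 else 0)"
    using fX by (simp add: sum_subtractf sum.delta)
  finally have c2: "(\<Sum>(v, i) \<in> X. int D - int (degphi (insert u VH) (ext_edges HE w r u) (\<phi>(u := y)) i v))
      = sum ?g X - (if (\<phi> w, r) \<in> X then 1 else 0) - (if (y, r) \<in> X then 1 else 0)" .
  have "(y, r) \<notin> ?P" using y by (auto simp: Pset_image)
  then have c3: "int (card (insert (y, r) ?P \<inter> X)) = int (card (?P \<inter> X)) + (if (y, r) \<in> X then 1 else 0)"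
    using fX by (simp add: Int_insert_left)
  show ?thesis
    unfolding Rval_def Pset_ext_edges[OF cg ro u w] fun_upd_image_insert[OF u]
    using c1 c2 c3 by simp
qed

section \<open>Zeros of \<open>R\<close>\<close>

text \<open>The union of two zeros is again a zero, since it has at most \<open>2k\<close> elements; so a zero of
  maximum size contains all the others.\<close>

lemma submodular_largest_zero:
  fixes f :: "'c set \<Rightarrow> int"
  assumes S: "finite S"
    and submod: "\<And>X Y. X \<subseteq> S \<Longrightarrow> Y \<subseteq> S \<Longrightarrow> f (X \<union> Y) + f (X \<inter> Y) \<le> f X + f Y"
    and nonneg: "\<And>X. X \<subseteq> S \<Longrightarrow> card X \<le> 2 * k \<Longrightarrow> f X \<ge> 0"
    and small: "\<And>X. X \<subseteq> S \<Longrightarrow> card X \<le> 2 * k \<Longrightarrow> f X = 0 \<Longrightarrow> card X < k"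
    and "f {} = 0"
  shows "\<exists>U \<subseteq> S. card U < k \<and> f U = 0 \<and> (\<forall>X \<subseteq> S. card X \<le> 2 * k \<longrightarrow> f X = 0 \<longrightarrow> X \<subseteq> U)"
proof -
  define Z where "Z = {X. X \<subseteq> S \<and> card X \<le> 2 * k \<and> f X = 0}"
  have "finite Z" using S unfolding Z_def by (auto intro: finite_subset[of _ "Pow S"])
  moreover have "{} \<in> Z" using \<open>f {} = 0\<close> by (simp add: Z_def)
  ultimately obtain U where U: "U \<in> Z" and U_max: "\<And>X. X \<in> Z \<Longrightarrow> card X \<le> card U"
    using Max_in[of "card ` Z"] Max_ge[of "card ` Z"] by (metis (no_types, lifting) empty_iff finite_imageI image_iff)
  have "X \<subseteq> U" if X: "X \<in> Z" for X
  proof -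
    have fin: "finite X" "finite U" using X U S by (auto simp: Z_def intro: finite_subset)
    have "card X < k" "card U < k" using X U small by (auto simp: Z_def)
    then have cards: "card (X \<union> U) \<le> 2 * k" "card (X \<inter> U) \<le> 2 * k"
      using card_Un_le[of X U] card_mono[OF fin(1), of "X \<inter> U"] by auto
    have "f (X \<union> U) + f (X \<inter> U) \<le> f X + f U" using X U by (intro submod) (auto simp: Z_def)
    moreover have "f (X \<union> U) \<ge> 0" "f (X \<inter> U) \<ge> 0"
      using X U cards by (auto simp: Z_def intro!: nonneg)
    ultimately have "X \<union> U \<in> Z" using X U cards by (auto simp: Z_def)
    then have "card (X \<union> U) \<le> card U" by (rule U_max)
    then show ?thesis using fin by (metis Un_upper2 card_seteq finite_Un sup.absorb_iff1 sup_commute)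
  qed
  then show ?thesis using U small by (auto simp: Z_def)
qed

lemma Rval_largest_zero:
  fixes a
  assumes gf: "graph_family V t G" and sj: "s_joined V t G s" and s: "s \<ge> 1"
    and fVH: "finite VH"
    and small: "int (card VH) \<le> int (card V) - 2 * int s * int D - 3 * int s"
    and gd: "good V t G VH HE R (2 * s) D \<phi>"
  defines "S \<equiv> V \<times> {1..t} - {a}"
  shows "\<exists>U \<subseteq> S. card U < s \<and> Rval V G VH HE R D \<phi> U = 0 \<and>
    (\<forall>X \<subseteq> S. card X \<le> 2 * s \<longrightarrow> Rval V G VH HE R D \<phi> X = 0 \<longrightarrow> X \<subseteq> U)"
proof (rule submodular_largest_zero)
  let ?Rv = "Rval V G VH HE R D \<phi>"
  have fV: "finite V" using gf by (simp add: graph_family_def)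
  then show fS: "finite S" by (simp add: S_def)
  show "?Rv (X \<union> Y) + ?Rv (X \<inter> Y) \<le> ?Rv X + ?Rv Y" if "X \<subseteq> S" "Y \<subseteq> S" for X Y
    using Rval_submodular[OF fV finite_subset[OF that(1) fS] finite_subset[OF that(2) fS]] .
  show "?Rv X \<ge> 0" if "X \<subseteq> S" "card X \<le> 2 * s" for X
    using gd that by (auto simp: good_def S_def)
  show "card X < s" if X: "X \<subseteq> S" "card X \<le> 2 * s" "?Rv X = 0" for X
  proof (rule ccontr)
    assume "\<not> card X < s"
    then have "?Rv X \<ge> 1" using X s by (intro Rval_pos_if_card_ge[OF gf sj fVH small]) (auto simp: S_def)
    then show False using X(3) by simp
  qed
qed (rule Rval_empty)

text \<open>\<open>y\<close> is chosen outside the neighbourhood of the largest zero \<open>U\<close> of \<open>R\<close> avoiding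
  \<open>(\<phi>(w), r)\<close>; it exists because adding \<open>(\<phi>(w), r)\<close> to \<open>U\<close> subtracts \<open>D - deg\<^sub>H\<^sub>r(w) > 0\<close>,
  which only a new neighbour outside the image of \<open>\<phi>\<close> can compensate.\<close>

lemma good_embedding_fresh_neighbour:
  assumes gf: "graph_family V t G" and sj: "s_joined V t G s" and s: "s \<ge> 1"
    and fVH: "finite VH"
    and small: "int (card VH) \<le> int (card V) - 2 * int s * int D - 3 * int s"
    and w: "w \<in> VH" and r: "r \<in> {1..t}" and dw: "hdeg VH HE r w < D"
    and emb: "embedding V G VH HE \<phi>" and gd: "good V t G VH HE R (2 * s) D \<phi>"
  shows "\<exists>y \<in> V. y \<notin> \<phi> ` VH \<and> G r (\<phi> w) y \<and>
    (\<forall>X \<subseteq> V \<times> {1..t}. card X \<le> 2 * s \<longrightarrow> Rval V G VH HE R D \<phi> X = 0 \<longrightarrow> (\<phi> w, r) \<notin> X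
       \<longrightarrow> y \<notin> Gamma V G X)"
proof -
  let ?Rv = "Rval V G VH HE R D \<phi>" and ?T = "\<phi> ` VH" and ?a = "(\<phi> w, r)"
  have fV: "finite V" using gf by (simp add: graph_family_def)
  obtain U where U: "U \<subseteq> V \<times> {1..t} - {?a}" "card U < s" "?Rv U = 0"
    and U_max: "\<And>X. X \<subseteq> V \<times> {1..t} - {?a} \<Longrightarrow> card X \<le> 2 * s \<Longrightarrow> ?Rv X = 0 \<Longrightarrow> X \<subseteq> U"
    using Rval_largest_zero[OF gf sj s fVH small gd, of ?a] by blast
  have fU: "finite U" using U(1) fV by (auto intro: finite_subset)
  have "?a \<notin> U" "insert ?a U \<subseteq> V \<times> {1..t}" using U(1) emb w r by (auto simp: embedding_def)
  then have "?Rv (insert ?a U) \<ge> 0" using U(2) fU gd by (simp add: good_def)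
  moreover have "degphi VH HE \<phi> r (\<phi> w) = hdeg VH HE r w"
    using emb w by (simp add: degphi_def embedding_def)
  then have "(\<Sum>(v, i) \<in> insert ?a U. int D - int (degphi VH HE \<phi> i v))
      = int D - int (hdeg VH HE r w) + (\<Sum>(v, i) \<in> U. int D - int (degphi VH HE \<phi> i v))"
    using fU \<open>?a \<notin> U\<close> by simp
  moreover have "card (Pset VH HE R \<phi> \<inter> U) \<le> card (Pset VH HE R \<phi> \<inter> insert ?a U)"
    using fU by (intro card_mono) auto
  ultimately have "card (Gamma V G U - ?T) < card (Gamma V G (insert ?a U) - ?T)"
    using U(3) dw unfolding Rval_def by linarith
  moreover have "finite (Gamma V G U - ?T)" using finite_subset[OF Gamma_subset fV] by simp
  ultimately have "\<not> Gamma V G (insert ?a U) - ?T \<subseteq> Gamma V G U - ?T"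
    by (metis card_mono leD)
  then obtain y where y: "y \<in> Gamma V G (insert ?a U)" "y \<notin> ?T" "y \<notin> Gamma V G U" by blast
  moreover have "Gamma V G (insert ?a U) = Gamma V G {?a} \<union> Gamma V G U"
    using Gamma_Un[of V G "{?a}" U] by simp
  ultimately have "y \<in> V" "G r y (\<phi> w)" by (auto simp: Gamma_def)
  moreover have "G r (\<phi> w) y" using gf r \<open>G r y (\<phi> w)\<close> by (auto simp: graph_family_def)
  moreover have "y \<notin> Gamma V G X"
    if "X \<subseteq> V \<times> {1..t}" "card X \<le> 2 * s" "?Rv X = 0" "?a \<notin> X" for X
    using that U_max[of X] Gamma_mono[of X U V G] y(3) by blast
  ultimately show ?thesis using y(2) by blast
qed

lemma good_ext_edges:
  assumes fV: "finite V" and cg: "colored_graph VH t HE" and ro: "rooted VH HE R"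
    and u: "u \<notin> VH" and w: "w \<in> VH" and inj: "inj_on \<phi> VH" and y: "y \<notin> \<phi> ` VH"
    and gd: "good V t G VH HE R k D \<phi>"
    and y_fresh: "\<forall>X \<subseteq> V \<times> {1..t}. card X \<le> k \<longrightarrow> Rval V G VH HE R D \<phi> X = 0
       \<longrightarrow> (\<phi> w, r) \<notin> X \<longrightarrow> y \<notin> Gamma V G X"
  shows "good V t G (insert u VH) (ext_edges HE w r u) R k D (\<phi>(u := y))"
  unfolding good_def
proof (intro allI impI)
  fix X assume X: "X \<subseteq> V \<times> {1..t} \<and> card X \<le> k"
  then have "finite X" using fV by (auto intro: finite_subset)
  then have eq: "Rval V G (insert u VH) (ext_edges HE w r u) R D (\<phi>(u := y)) X
      = Rval V G VH HE R D \<phi> X - (if y \<in> Gamma V G X then 1 else 0)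
        + (if (\<phi> w, r) \<in> X then 1 else 0)"
    by (rule Rval_ext_edges[OF fV cg ro u w inj y])
  have "Rval V G VH HE R D \<phi> X \<ge> 0" using gd X by (simp add: good_def)
  moreover have "Rval V G VH HE R D \<phi> X \<noteq> 0" if "y \<in> Gamma V G X" "(\<phi> w, r) \<notin> X"
    using y_fresh X that by blast
  ultimately show "Rval V G (insert u VH) (ext_edges HE w r u) R D (\<phi>(u := y)) X \<ge> 0"
    unfolding eq by (cases "y \<in> Gamma V G X"; cases "(\<phi> w, r) \<in> X") auto
qed

theorem lemma2p8:
  fixes V :: "'a set" and G :: "nat \<Rightarrow> 'a \<Rightarrow> 'a \<Rightarrow> bool"
    and VH :: "'b set" and HE :: "nat \<Rightarrow> 'b \<Rightarrow> 'b \<Rightarrow> bool" and R :: "'b set"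
    and s t D n r :: nat and w u :: 'b and \<phi> :: "'b \<Rightarrow> 'a"
  assumes "s \<ge> 1" and "t \<ge> 1" and "D \<ge> 1"
    and "graph_family V t G" and "card V = n" and "s_joined V t G s"
    and "colored_graph VH t HE" and "rooted VH HE R"
    and "max_mono_deg_le VH t HE D"
    and "int (card VH) \<le> int n - 2 * int s * int D - 3 * int s"
    and "w \<in> VH" and "r \<in> {1..t}" and "hdeg VH HE r w < D"
    and "u \<notin> VH"
    and "embedding V G VH HE \<phi>" and "good V t G VH HE R (2 * s) D \<phi>"
  shows "\<exists>\<phi>'. embedding V G (insert u VH) (ext_edges HE w r u) \<phi>' \<and>
              (\<forall>x\<in>VH. \<phi>' x = \<phi> x) \<and>
              good V t G (insert u VH) (ext_edges HE w r u) R (2 * s) D \<phi>'"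
proof -
  have fV: "finite V" using assms(4) by (simp add: graph_family_def)
  have fVH: "finite VH" using assms(7) by (simp add: colored_graph_def)
  have small: "int (card VH) \<le> int (card V) - 2 * int s * int D - 3 * int s"
    using assms(5,10) by simp
  obtain y where y: "y \<in> V" "y \<notin> \<phi> ` VH" "G r (\<phi> w) y"
    and fresh: "\<forall>X \<subseteq> V \<times> {1..t}. card X \<le> 2 * s \<longrightarrow> Rval V G VH HE R D \<phi> X = 0
       \<longrightarrow> (\<phi> w, r) \<notin> X \<longrightarrow> y \<notin> Gamma V G X"
    using good_embedding_fresh_neighbour[OF assms(4,6,1) fVH small assms(11-13,15,16)] by blast
  have "inj_on \<phi> VH" using assms(15) by (simp add: embedding_def)
  have "embedding V G (insert u VH) (ext_edges HE w r u) (\<phi>(u := y))"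
    by (rule embedding_ext_edges[OF assms(4,7,12,14,11,15) y])
  moreover have "good V t G (insert u VH) (ext_edges HE w r u) R (2 * s) D (\<phi>(u := y))"
    by (rule good_ext_edges[OF fV assms(7,8,14,11) \<open>inj_on \<phi> VH\<close> y(2) assms(16) fresh])
  moreover have "\<forall>x\<in>VH. (\<phi>(u := y)) x = \<phi> x" using assms(14) by auto
  ultimately show ?thesis by blast
qed

end
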